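(* Assume $E$ is countable, let $\gamma$ be a POS and $\alpha$ a dust-rate matrix for $\gamma$. Let $y\in S$, $x\in S\setminus y_+$, and let $f$ be a bounded $\mathcal F_{S\setminus y_+}$-measurable function. Then $\delta_x(\gamma_y f)=0$ if $x=y$; $\delta_x(\gamma_y f)\le\delta_x(f)$ if $x\in\{y\}^*$; and $\delta_x(\gamma_y f)\le\delta_x(f)+\delta_y(f)\,\alpha_{y,x}$ if $x<y$.
   Context: $(S,\le)$ is a countable partially ordered set. For $x\in S$ write $x_-=\{y\in S:y<x\}$, $x_+=\{y\in S:y>x\}$. For $\Upsilon\subset S$: $\max(\Upsilon)=\{x\in\Upsilon: y\notin\Upsilon\text{ for all }y>x\}$, $\min(\Upsilon)=\{x\in\Upsilon: y\notin\Upsilon\text{ for all }y<x\}$, the past $\Upsilon_-=\{x\in S\setminus\Upsilon:\exists y\in\Upsilon,\ x<y\}$, the future $\Upsilon_+=\{x\in S\setminus\Upsilon:\exists y\in\Upsilon,\ x>y\}$, and the outer time $\Upsilon^*=\{x\in S: x\text{ is comparable with no }y\in\Upsilon\}$. Standing assumptions: for every $x\in S$, $\max(x_-)$ and $\min(x_+)$ are finite, every $y<x$ satisfies $y\le y_0<x$ for some $y_0\in\max(x_-)$, every $z>x$ satisfies $z\ge z_0>x$ for some $z_0\in\min(x_+)$; and $S$ has no minimal element. A finite set $\Lambda\subset S$ is a time box if $\Lambda_-\cap\Lambda_+=\emptyset$. $\Omega=E^S$ with product $\sigma$-algebra $\mathcal F$; $\mathcal F_\Upsilon$ is generated by coordinates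 in $\Upsilon$. A proper oriented kernel on a time box $\Lambda$ is a map $\gamma_\Lambda:\mathcal F_{S\setminus\Lambda_+}\times\Omega\to[0,1]$ such that (a) $\gamma_\Lambda(\cdot,\omega)$ is a probability measure; (b) $\gamma_\Lambda(A,\cdot)$ is $\mathcal F_{\Lambda_-\cup\Lambda^*}$-measurable for $A\in\mathcal F_{S\setminus\Lambda_+}$; (c) $\gamma_\Lambda(A,\cdot)$ is $\mathcal F_{\Lambda_-}$-measurable for $A\in\mathcal F_\Lambda$; (d) $\gamma_\Lambda(B,\omega)=\mathbf 1_B(\omega)$ for $B\in\mathcal F_{\Lambda_-\cup\Lambda^*}$. A POS is a family $\gamma=(\gamma_\Lambda)$ of proper oriented kernels indexed by all time boxes with $\gamma_\Delta\gamma_\Lambda=\gamma_\Delta$ on $\mathcal F_{S\setminus\Lambda_+}$ whenever $\Lambda\subset\Delta$ (composition $(\gamma_\Delta\gamma_\Lambda)(f\mid\omega)=\int\gamma_\Lambda(f\mid\sigma)\gamma_\Delta(d\sigma,\omega)$). We write $\gamma_y=\gamma_{\{y\}}$ and $\gamma_y f(\omega)=\int f\,d\gamma_y(\cdot,\omega)$. For $\xi,\eta\in\Omega$ and $x\in S$, $\xi\overset{x}{=}\eta$ means $\xi_z=\eta_z$ for all $z\ne x$; $\delta_x(f)=\sup_{\xi\overset{x}{=}\eta}|f(\xi)-f(\eta)|$. A dust-rate matrix is a family $(\alpha_{y,x})_{x\le y}$ of nonnegative reals with $\alpha_{y,y}=0$ and $\delta_x(\gamma_y f)\le\delta_y(f)\,\alpha_{y,x}$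 for all $y\in S$, $x\in y_-$ and all bounded $\mathcal F_{\{y\}}$-measurable $f$. *)

theory Defs
  imports "HOL-Probability.Probability"
begin

text \<open>The countable poset S is the type 's (class countable, order); the state space E is the
  countable type 'e (discrete sigma-algebra); configurations are \<open>'s \<Rightarrow> 'e\<close>.\<close>

definition max_set :: "'s::order set \<Rightarrow> 's set" where
  "max_set U = {x \<in> U. \<forall>y. x < y \<longrightarrow> y \<notin> U}"

definition min_set :: "'s::order set \<Rightarrow> 's set" where
  "min_set U = {x \<in> U. \<forall>y. y < x \<longrightarrow> y \<notin> U}"

definition past :: "'s::order set \<Rightarrow> 's set" where
  "past U = {x. x \<notin> U \<and> (\<exists>y\<in>U. x < y)}"

definition future :: "'s::order set \<Rightarrow> 's set" where
  "future U = {x. x \<notin> U \<and> (\<exists>y\<in>U. y < x)}"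

definition outer :: "'s::order set \<Rightarrow> 's set" where
  "outer U = {x. \<forall>y\<in>U. \<not> (x \<le> y) \<and> \<not> (y \<le> x)}"

definition standing_poset :: "'s::order itself \<Rightarrow> bool" where
  "standing_poset _ \<longleftrightarrow>
     (\<forall>x::'s. finite (max_set {y. y < x}) \<and> finite (min_set {z. x < z})) \<and>
     (\<forall>x y::'s. y < x \<longrightarrow> (\<exists>y0 \<in> max_set {y. y < x}. y \<le> y0)) \<and>
     (\<forall>x z::'s. x < z \<longrightarrow> (\<exists>z0 \<in> min_set {z. x < z}. z0 \<le> z)) \<and>
     (\<forall>x::'s. \<exists>y. y < x)"

definition time_box :: "'s::order set \<Rightarrow> bool" where
  "time_box L \<longleftrightarrow> finite L \<and> past L \<inter> future L = {}"

text \<open>\<open>FM U\<close>: the measurable space \<open>(\<Omega>, \<F>_U)\<close>, \<open>\<F>_U\<close> generated by the coordinates in U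
  (E carries its discrete sigma-algebra).\<close>
definition FM :: "'s set \<Rightarrow> ('s \<Rightarrow> 'e) measure" where
  "FM U = sigma UNIV {{\<omega>. \<omega> z \<in> A} | z A. z \<in> U}"

text \<open>A proper oriented kernel on L: \<open>K \<omega>\<close> is the measure \<open>\<gamma>_L(\<cdot>,\<omega>)\<close> on \<open>\<F>_{S\<setminus>L_+}\<close>.\<close>
definition proper_oriented_kernel :: "'s::order set \<Rightarrow> (('s \<Rightarrow> 'e) \<Rightarrow> ('s \<Rightarrow> 'e) measure) \<Rightarrow> bool" where
  "proper_oriented_kernel L K \<longleftrightarrow>
     (\<forall>\<omega>. prob_space (K \<omega>) \<and> sets (K \<omega>) = sets (FM (UNIV - future L))) \<and>
     (\<forall>A \<in> sets (FM (UNIV - future L)).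
        (\<lambda>\<omega>. measure (K \<omega>) A) \<in> borel_measurable (FM (past L \<union> outer L))) \<and>
     (\<forall>A \<in> sets (FM L). (\<lambda>\<omega>. measure (K \<omega>) A) \<in> borel_measurable (FM (past L))) \<and>
     (\<forall>B \<in> sets (FM (past L \<union> outer L)). \<forall>\<omega>. measure (K \<omega>) B = indicator B \<omega>)"

text \<open>POS: proper oriented kernels on every time box, with the consistency
  \<open>\<gamma>_\<Delta>\<gamma>_\<Lambda> = \<gamma>_\<Delta>\<close>.\<close>
definition POS :: "('s::order set \<Rightarrow> ('s \<Rightarrow> 'e) \<Rightarrow> ('s \<Rightarrow> 'e) measure) \<Rightarrow> bool" where
  "POS \<gamma> \<longleftrightarrow>
     (\<forall>L. time_box L \<longrightarrow> proper_oriented_kernel L (\<gamma> L)) \<and>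
     (\<forall>L D. time_box L \<longrightarrow> time_box D \<longrightarrow> L \<subseteq> D \<longrightarrow>
        (\<forall>A \<in> sets (FM (UNIV - future L)) \<inter> sets (FM (UNIV - future D)). \<forall>\<omega>.
           (\<integral>\<sigma>. measure (\<gamma> L (\<lambda>z. if z \<in> future D then \<omega> z else \<sigma> z)) A \<partial>(\<gamma> D \<omega>))
             = measure (\<gamma> D \<omega>) A))"

definition gamma_pt :: "('s::order set \<Rightarrow> ('s \<Rightarrow> 'e) \<Rightarrow> ('s \<Rightarrow> 'e) measure) \<Rightarrow> 's
     \<Rightarrow> (('s \<Rightarrow> 'e) \<Rightarrow> real) \<Rightarrow> ('s \<Rightarrow> 'e) \<Rightarrow> real" where
  "gamma_pt \<gamma> y f \<omega> = (\<integral>\<sigma>. f \<sigma> \<partial>(\<gamma> {y} \<omega>))"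

definition osc :: "'s \<Rightarrow> (('s \<Rightarrow> 'e) \<Rightarrow> real) \<Rightarrow> real" where
  "osc x f = Sup {\<bar>f \<xi> - f \<eta>\<bar> | \<xi> \<eta>. \<forall>z. z \<noteq> x \<longrightarrow> \<xi> z = \<eta> z}"

definition bounded_fun :: "('a \<Rightarrow> real) \<Rightarrow> bool" where
  "bounded_fun f \<longleftrightarrow> (\<exists>B. \<forall>a. \<bar>f a\<bar> \<le> B)"

definition dust_rate :: "('s::order set \<Rightarrow> ('s \<Rightarrow> 'e) \<Rightarrow> ('s \<Rightarrow> 'e) measure)
     \<Rightarrow> ('s \<Rightarrow> 's \<Rightarrow> real) \<Rightarrow> bool" where
  "dust_rate \<gamma> \<alpha> \<longleftrightarrow>
     (\<forall>x y. x \<le> y \<longrightarrow> 0 \<le> \<alpha> y x) \<and> (\<forall>y. \<alpha> y y = 0) \<and>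
     (\<forall>y x f. x < y \<longrightarrow> f \<in> borel_measurable (FM {y}) \<longrightarrow> bounded_fun f \<longrightarrow>
        osc x (gamma_pt \<gamma> y f) \<le> osc y f * \<alpha> y x)"

end

theory Submission
  imports Defs
begin

(* For the single-site time box {y} the kernel gamma_y leaves every coordinate in
   the past and the outer time of y untouched (property (d), applied to countably many
   coordinates), so for f measurable on S - y_+ the value gamma_y f(w) is the average of
   e |-> f(w[y:=e]) against the law P_w of the spin at y under gamma_y(.,w).  By property (c)
   this law depends on w only through its past y_-.  Hence
     - for x = y, gamma_y f does not depend on w_y at all;
     - for x in the outer time, P_w does not see w_x, so only the integrand changes, by at most
       delta_x(f);
     - for x < y, one first changes w_x in the integrand (cost delta_x(f)) and then in the law,
       which is gamma_y h for an F_{y}-measurable h with delta_y(h) <= delta_y(f); the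
       dust-rate bound controls the latter. *)

lemma space_FM [simp]: "space (FM U) = UNIV"
  unfolding FM_def by (simp add: space_measure_of_conv)

lemma sets_FM: "sets (FM U) = sigma_sets UNIV {{\<omega>. \<omega> z \<in> A} | z A. z \<in> U}"
  unfolding FM_def by (rule sets_measure_of) auto

lemma FM_set_saturated:
  assumes "A \<in> sets (FM U)"
  shows "\<forall>\<sigma> \<tau>. (\<forall>z\<in>U. \<sigma> z = \<tau> z) \<longrightarrow> (\<sigma> \<in> A \<longleftrightarrow> \<tau> \<in> A)"
  using assms unfolding sets_FM
  by (induction rule: sigma_sets.induct) (blast | auto)+

lemma FM_fun_saturated:
  fixes f :: "_ \<Rightarrow> real"
  assumes "f \<in> borel_measurable (FM U)" "\<forall>z\<in>U. \<sigma> z = \<tau> z"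
  shows "f \<sigma> = f \<tau>"
proof -
  have "f -` {f \<tau>} \<inter> space (FM U) \<in> sets (FM U)"
    using assms(1) by (rule measurable_sets) auto
  from FM_set_saturated[OF this[simplified]] assms(2) show ?thesis by auto
qed

lemma coord_set_in_FM: "z \<in> U \<Longrightarrow> {\<omega>. \<omega> z \<in> A} \<in> sets (FM U)"
  unfolding sets_FM by (rule sigma_sets.Basic) auto

lemma coord_measurable:
  assumes "z \<in> U"
  shows "(\<lambda>\<sigma>. \<sigma> z) \<in> measurable (FM U) (count_space (UNIV::'e::countable set))"
proof -
  have "(\<lambda>\<sigma>. \<sigma> z) -` {a} \<inter> space (FM U) \<in> sets (FM U)" for a :: 'e
    using coord_set_in_FM[OF assms, of "{a}"] by (simp add: vimage_def)
  then show ?thesis by (subst measurable_count_space_eq_countable) auto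
qed

lemma osc_upper:
  assumes "bounded_fun f" "\<forall>z. z \<noteq> x \<longrightarrow> \<xi> z = \<eta> z"
  shows "\<bar>f \<xi> - f \<eta>\<bar> \<le> osc x f"
proof -
  obtain B where B: "\<And>a. \<bar>f a\<bar> \<le> B" using assms(1) unfolding bounded_fun_def by blast
  have "bdd_above {\<bar>f \<xi> - f \<eta>\<bar> | \<xi> \<eta>. \<forall>z. z \<noteq> x \<longrightarrow> \<xi> z = \<eta> z}"
  proof (rule bdd_aboveI)
    fix r assume "r \<in> {\<bar>f \<xi> - f \<eta>\<bar> | \<xi> \<eta>. \<forall>z. z \<noteq> x \<longrightarrow> \<xi> z = \<eta> z}"
    then obtain a b where "r = \<bar>f a - f b\<bar>" by blast
    with B[of a] B[of b] show "r \<le> 2 * B" by linarith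
  qed
  then show ?thesis unfolding osc_def using assms(2) by (intro cSup_upper) auto
qed

lemma osc_least:
  assumes "\<And>\<xi> \<eta>. \<forall>z. z \<noteq> x \<longrightarrow> \<xi> z = \<eta> z \<Longrightarrow> \<bar>f \<xi> - f \<eta>\<bar> \<le> c"
  shows "osc x f \<le> c"
  unfolding osc_def using assms by (intro cSup_least) auto

lemma osc_eq_0:
  assumes "\<And>\<xi> \<eta>. \<forall>z. z \<noteq> x \<longrightarrow> \<xi> z = \<eta> z \<Longrightarrow> f \<xi> = f \<eta>"
  shows "osc x f = 0"
proof -
  have "{\<bar>f \<xi> - f \<eta>\<bar> | \<xi> \<eta>. \<forall>z. z \<noteq> x \<longrightarrow> \<xi> z = \<eta> z} = {0}"
    using assms by fastforce
  then show ?thesis unfolding osc_def by simp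
qed

lemma prob_integral_diff_le:
  fixes f g :: "_ \<Rightarrow> real"
  assumes "prob_space M" "integrable M f" "integrable M g" "\<And>e. \<bar>f e - g e\<bar> \<le> c"
  shows "\<bar>(\<integral>e. f e \<partial>M) - (\<integral>e. g e \<partial>M)\<bar> \<le> c"
proof -
  have "\<bar>(\<integral>e. f e \<partial>M) - (\<integral>e. g e \<partial>M)\<bar> = \<bar>\<integral>e. f e - g e \<partial>M\<bar>"
    using assms by simp
  also have "\<dots> \<le> (\<integral>e. \<bar>f e - g e\<bar> \<partial>M)"
    using integral_abs_bound[of M "\<lambda>e. f e - g e"] by simp
  also have "\<dots> \<le> (\<integral>e. c \<partial>M)"
    using assms finite_measure.integrable_const[of M c] prob_space_def[of M]
    by (intro integral_mono) auto
  also have "\<dots> = c" using prob_space.prob_space[OF assms(1)] by simp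
  finally show ?thesis .
qed

lemma time_box_singleton: "time_box {y}"
  unfolding time_box_def past_def future_def by auto

lemma past_singleton: "past {y} = {z. z < y}"
  unfolding past_def by auto

lemma outer_singleton: "outer {y} = {z. \<not> z \<le> y \<and> \<not> y \<le> z}"
  unfolding outer_def by auto

lemma not_future_singleton: "UNIV - future {y} = insert y (past {y} \<union> outer {y})"
  unfolding past_def future_def outer_def by auto

locale site_kernel =
  fixes \<gamma> :: "'s::{order,countable} set \<Rightarrow> ('s \<Rightarrow> 'e::countable) \<Rightarrow> ('s \<Rightarrow> 'e) measure"
    and y :: 's
  assumes proper: "proper_oriented_kernel {y} (\<gamma> {y})"
begin

definition law :: "('s \<Rightarrow> 'e) \<Rightarrow> 'e measure" where
  "law \<omega> = distr (\<gamma> {y} \<omega>) (count_space UNIV) (\<lambda>\<sigma>. \<sigma> y)"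

lemma prob_space_kernel: "prob_space (\<gamma> {y} \<omega>)"
  and sets_kernel: "sets (\<gamma> {y} \<omega>) = sets (FM (UNIV - future {y}))"
  using proper unfolding proper_oriented_kernel_def by auto

lemma coord_y_measurable_kernel:
  "(\<lambda>\<sigma>. \<sigma> y) \<in> measurable (\<gamma> {y} \<omega>) (count_space UNIV)"
  using coord_measurable[of y "UNIV - future {y}"] measurable_cong_sets[OF sets_kernel refl]
  by (auto simp: future_def)

lemma prob_space_law: "prob_space (law \<omega>)"
  unfolding law_def
  by (rule prob_space.prob_space_distr[OF prob_space_kernel coord_y_measurable_kernel])

lemma integrable_law:
  fixes G :: "'e \<Rightarrow> real"
  assumes "\<And>e. \<bar>G e\<bar> \<le> B"
  shows "integrable (law \<omega>) G"
proof (rule finite_measure.integrable_const_bound[where B = B])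
  show "finite_measure (law \<omega>)" using prob_space_law prob_space_def by blast
  show "G \<in> borel_measurable (law \<omega>)" unfolding law_def by simp
qed (use assms in auto)

text \<open>Property (d): almost surely, \<open>\<gamma>_y(\<cdot>,\<omega>)\<close> keeps \<omega> on the past and the outer time of y;
  countability of S lets us intersect over all these coordinates.\<close>
lemma kernel_keeps_outside:
  "AE \<sigma> in \<gamma> {y} \<omega>. \<forall>z\<in>past {y} \<union> outer {y}. \<sigma> z = \<omega> z"
proof (subst AE_ball_countable)
  show "\<forall>z\<in>past {y} \<union> outer {y}. AE \<sigma> in \<gamma> {y} \<omega>. \<sigma> z = \<omega> z"
  proof
    fix z assume "z \<in> past {y} \<union> outer {y}"
    then have B: "{\<sigma>. \<sigma> z \<in> {\<omega> z}} \<in> sets (FM (past {y} \<union> outer {y}))"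
      by (rule coord_set_in_FM)
    then have "measure (\<gamma> {y} \<omega>) {\<sigma>. \<sigma> z \<in> {\<omega> z}} = 1"
      using proper unfolding proper_oriented_kernel_def by simp
    from prob_space.AE_prob_1[OF prob_space_kernel this]
    show "AE \<sigma> in \<gamma> {y} \<omega>. \<sigma> z = \<omega> z" by simp
  qed
qed simp

lemma gamma_pt_eq_law_integral:
  assumes F: "F \<in> borel_measurable (FM (UNIV - future {y}))"
  shows "gamma_pt \<gamma> y F \<omega> = (\<integral>e. F (fun_upd \<omega> y e) \<partial>law \<omega>)"
proof -
  have "AE \<sigma> in \<gamma> {y} \<omega>. F \<sigma> = F (fun_upd \<omega> y (\<sigma> y))"
    using kernel_keeps_outside
  proof (rule AE_mp, intro AE_I2 impI)
    fix \<sigma> assume "\<forall>z\<in>past {y} \<union> outer {y}. \<sigma> z = \<omega> z"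
    then have "\<forall>z\<in>UNIV - future {y}. \<sigma> z = (fun_upd \<omega> y (\<sigma> y)) z"
      unfolding not_future_singleton by auto
    from FM_fun_saturated[OF F this] show "F \<sigma> = F (fun_upd \<omega> y (\<sigma> y))" .
  qed
  moreover have "F \<in> borel_measurable (\<gamma> {y} \<omega>)"
    using F measurable_cong_sets[OF sets_kernel refl] by blast
  moreover have "(\<lambda>\<sigma>. F (fun_upd \<omega> y (\<sigma> y))) \<in> borel_measurable (\<gamma> {y} \<omega>)"
    using measurable_compose[OF coord_y_measurable_kernel, of "\<lambda>e. F (fun_upd \<omega> y e)" borel]
    by auto
  ultimately have "gamma_pt \<gamma> y F \<omega> = (\<integral>\<sigma>. F (fun_upd \<omega> y (\<sigma> y)) \<partial>\<gamma> {y} \<omega>)"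
    unfolding gamma_pt_def by (intro integral_cong_AE)
  also have "\<dots> = (\<integral>e. F (fun_upd \<omega> y e) \<partial>law \<omega>)"
    unfolding law_def by (rule integral_distr[symmetric, OF coord_y_measurable_kernel]) auto
  finally show ?thesis .
qed

lemma law_depends_on_past:
  assumes agree: "\<forall>z. z < y \<longrightarrow> \<xi> z = \<eta> z"
  shows "law \<xi> = law \<eta>"
proof (rule measure_eqI)
  show "sets (law \<xi>) = sets (law \<eta>)" unfolding law_def by simp
  fix A assume "A \<in> sets (law \<xi>)"
  have "{\<sigma>. \<sigma> y \<in> A} \<in> sets (FM {y})" by (rule coord_set_in_FM) simp
  then have "(\<lambda>\<omega>. measure (\<gamma> {y} \<omega>) {\<sigma>. \<sigma> y \<in> A}) \<in> borel_measurable (FM (past {y}))"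
    using proper unfolding proper_oriented_kernel_def by blast
  from FM_fun_saturated[OF this] agree
  have "measure (\<gamma> {y} \<xi>) {\<sigma>. \<sigma> y \<in> A} = measure (\<gamma> {y} \<eta>) {\<sigma>. \<sigma> y \<in> A}"
    by (simp add: past_singleton)
  moreover have "emeasure (law \<omega>) A = measure (\<gamma> {y} \<omega>) {\<sigma>. \<sigma> y \<in> A}" for \<omega>
  proof -
    have "emeasure (law \<omega>) A = emeasure (\<gamma> {y} \<omega>) {\<sigma>. \<sigma> y \<in> A}"
      unfolding law_def using sets_eq_imp_space_eq[OF sets_kernel]
      by (subst emeasure_distr[OF coord_y_measurable_kernel]) (auto simp: vimage_def)
    then show ?thesis
      using prob_space_kernel prob_space_def finite_measure.emeasure_eq_measure by metis
  qed
  ultimately show "emeasure (law \<xi>) A = emeasure (law \<eta>) A" by simp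
qed

lemma bounded_gamma_pt:
  assumes F: "F \<in> borel_measurable (FM (UNIV - future {y}))" and B: "\<And>\<omega>. \<bar>F \<omega>\<bar> \<le> B"
  shows "bounded_fun (gamma_pt \<gamma> y F)"
proof -
  have "\<bar>gamma_pt \<gamma> y F \<omega>\<bar> \<le> B" for \<omega>
  proof -
    have "\<bar>(\<integral>e. F (fun_upd \<omega> y e) \<partial>law \<omega>) - (\<integral>e. 0 \<partial>law \<omega>)\<bar> \<le> B"
      by (rule prob_integral_diff_le[OF prob_space_law integrable_law integrable_law])
         (use B in auto)
    then show ?thesis by (simp add: gamma_pt_eq_law_integral[OF F])
  qed
  then show ?thesis unfolding bounded_fun_def by blast
qed

context
  fixes f :: "('s \<Rightarrow> 'e) \<Rightarrow> real"
  assumes f_meas: "f \<in> borel_measurable (FM (UNIV - future {y}))"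
    and f_bounded: "bounded_fun f"
begin

lemma integrable_law_update: "integrable (law \<omega>) (\<lambda>e. f (fun_upd \<xi> y e))"
  using f_bounded integrable_law unfolding bounded_fun_def by metis

lemma integrand_change_le:
  assumes "\<forall>z. z \<noteq> x \<longrightarrow> \<xi> z = \<eta> z"
  shows "\<bar>(\<integral>e. f (fun_upd \<xi> y e) \<partial>law \<omega>) - (\<integral>e. f (fun_upd \<eta> y e) \<partial>law \<omega>)\<bar> \<le> osc x f"
  by (rule prob_integral_diff_le[OF prob_space_law integrable_law_update integrable_law_update])
     (rule osc_upper[OF f_bounded], simp add: assms)

text \<open>Case \<open>x = y\<close>: the spin at y is resampled, so \<open>\<gamma>_y f\<close> does not depend on it.\<close>
lemma osc_gamma_pt_site: "osc y (gamma_pt \<gamma> y f) = 0"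
proof (rule osc_eq_0)
  fix \<xi> \<eta> :: "'s \<Rightarrow> 'e" assume agree: "\<forall>z. z \<noteq> y \<longrightarrow> \<xi> z = \<eta> z"
  then have "law \<xi> = law \<eta>" by (intro law_depends_on_past) auto
  moreover have "fun_upd \<xi> y e = fun_upd \<eta> y e" for e using agree by auto
  ultimately show "gamma_pt \<gamma> y f \<xi> = gamma_pt \<gamma> y f \<eta>"
    by (simp add: gamma_pt_eq_law_integral[OF f_meas])
qed

text \<open>Case x in the outer time of y: the law does not see x.\<close>
lemma osc_gamma_pt_outer:
  assumes "x \<in> outer {y}"
  shows "osc x (gamma_pt \<gamma> y f) \<le> osc x f"
proof (rule osc_least)
  fix \<xi> \<eta> :: "'s \<Rightarrow> 'e" assume agree: "\<forall>z. z \<noteq> x \<longrightarrow> \<xi> z = \<eta> z"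
  have "\<not> x < y" using assms by (auto simp: outer_singleton)
  then have "law \<xi> = law \<eta>" using agree by (intro law_depends_on_past) auto
  then show "\<bar>gamma_pt \<gamma> y f \<xi> - gamma_pt \<gamma> y f \<eta>\<bar> \<le> osc x f"
    using integrand_change_le[OF agree, of \<xi>] by (simp add: gamma_pt_eq_law_integral[OF f_meas])
qed

text \<open>Case \<open>x < y\<close>: split into a change of the integrand and a change of the law; the latter
  is \<open>\<gamma>_y h\<close> for the \<open>\<F>_{y}\<close>-measurable function \<open>h = f(\<eta>[y := \<cdot>])\<close>, controlled by the
  dust rate.\<close>
lemma osc_gamma_pt_past:
  assumes dust: "dust_rate \<gamma> \<alpha>" and "x < y"
  shows "osc x (gamma_pt \<gamma> y f) \<le> osc x f + osc y f * \<alpha> y x"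
proof (rule osc_least)
  fix \<xi> \<eta> :: "'s \<Rightarrow> 'e" assume agree: "\<forall>z. z \<noteq> x \<longrightarrow> \<xi> z = \<eta> z"
  define h where "h \<sigma> = f (fun_upd \<eta> y (\<sigma> y))" for \<sigma>
  obtain B where B: "\<And>\<omega>. \<bar>f \<omega>\<bar> \<le> B" using f_bounded unfolding bounded_fun_def by blast
  have h_meas: "h \<in> borel_measurable (FM U)" if "y \<in> U" for U
    unfolding h_def by (rule measurable_compose[OF coord_measurable[OF that]]) simp
  have h_meas_V: "h \<in> borel_measurable (FM (UNIV - future {y}))"
    by (rule h_meas) (simp add: future_def)
  have h_bounded: "bounded_fun h" unfolding bounded_fun_def h_def using B by blast
  have gamma_h: "gamma_pt \<gamma> y h \<omega> = (\<integral>e. f (fun_upd \<eta> y e) \<partial>law \<omega>)" for \<omega>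
    using gamma_pt_eq_law_integral[OF h_meas_V] by (simp add: h_def)
  have osc_h: "osc y h \<le> osc y f"
    by (rule osc_least, unfold h_def, rule osc_upper[OF f_bounded]) simp
  have "\<bar>gamma_pt \<gamma> y h \<xi> - gamma_pt \<gamma> y h \<eta>\<bar> \<le> osc x (gamma_pt \<gamma> y h)"
    by (rule osc_upper[OF bounded_gamma_pt[OF h_meas_V, of B] agree]) (simp add: h_def B)
  also have "\<dots> \<le> osc y h * \<alpha> y x"
    using dust \<open>x < y\<close> h_meas[of "{y}"] h_bounded unfolding dust_rate_def by blast
  also have "\<dots> \<le> osc y f * \<alpha> y x"
    using dust \<open>x < y\<close> osc_h unfolding dust_rate_def by (intro mult_right_mono) auto
  finally have law_change:
    "\<bar>(\<integral>e. f (fun_upd \<eta> y e) \<partial>law \<xi>) - (\<integral>e. f (fun_upd \<eta> y e) \<partial>law \<eta>)\<bar> \<le> osc y f * \<alpha> y x"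
    by (simp add: gamma_h)
  show "\<bar>gamma_pt \<gamma> y f \<xi> - gamma_pt \<gamma> y f \<eta>\<bar> \<le> osc x f + osc y f * \<alpha> y x"
    using integrand_change_le[OF agree, of \<xi>] law_change
    by (simp add: gamma_pt_eq_law_integral[OF f_meas])
qed

end

end

theorem mainTheorem20:
  fixes \<gamma> :: "'s::{order,countable} set \<Rightarrow> ('s \<Rightarrow> 'e::countable) \<Rightarrow> ('s \<Rightarrow> 'e) measure"
    and \<alpha> :: "'s \<Rightarrow> 's \<Rightarrow> real"
    and y x :: 's
    and f :: "('s \<Rightarrow> 'e) \<Rightarrow> real"
  assumes "standing_poset TYPE('s)"
    and "POS \<gamma>"
    and "dust_rate \<gamma> \<alpha>"
    and "x \<notin> future {y}"
    and "f \<in> borel_measurable (FM (UNIV - future {y}))"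
    and "bounded_fun f"
  shows "(x = y \<longrightarrow> osc x (gamma_pt \<gamma> y f) = 0)
       \<and> (x \<in> outer {y} \<longrightarrow> osc x (gamma_pt \<gamma> y f) \<le> osc x f)
       \<and> (x < y \<longrightarrow> osc x (gamma_pt \<gamma> y f) \<le> osc x f + osc y f * \<alpha> y x)"
proof -
  interpret site_kernel \<gamma> y
    using \<open>POS \<gamma>\<close> time_box_singleton unfolding POS_def by unfold_locales blast
  show ?thesis
    using osc_gamma_pt_site osc_gamma_pt_outer osc_gamma_pt_past[OF _ _ \<open>dust_rate \<gamma> \<alpha>\<close>]
      \<open>f \<in> borel_measurable _\<close> \<open>bounded_fun f\<close>
    by blast
qed

end
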